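(* Let $Z$ be a strongly facially symmetric space with dual $U=Z^*$. Let $\{v_i\}_{i\ge1}$ be a countable family of mutually orthogonal minimal geometric tripotents and let $v=\sup_i v_i$ be its supremum with respect to the order $\le$ on geometric tripotents (this supremum exists). Then $v=\sum_i v_i$, the series converging in the weak$^*$ topology of $U$.
   Context: Let $Z$ be a complex normed space with dual $U=Z^*$ and closed unit ball $Z_1$. Elements $f,g\in Z$ are orthogonal if $\|f+g\|=\|f-g\|=\|f\|+\|g\|$; $S^\perp$ is the set of elements orthogonal to all elements of $S$. A norm exposed face is a nonempty set $F_x=\{f\in Z_1:f(x)=1\}$, $x\in U$, $\|x\|=1$. A projective unit is $u\in U$, $\|u\|=1$, with $\langle u,F_u^\perp\rangle=0$. A norm exposed face $F$ is symmetric if there is a surjective linear isometry $S_F$ of $Z$, $S_F^2=I$, with fixed point set $\overline{\mathrm{sp}}\,F\oplus F^\perp$. $Z$ is weakly facially symmetric (WFS) if all norm exposed faces are symmetric. For symmetric $F$: $P_1(F)=(I-S_F)/2$, and $P_2(F),P_0(F)$ are the projections onto $\overline{\mathrm{sp}}\,F$ and $F^\perp$ with $P_2(F)+P_0(F)=(I+S_F)/2$. A geometric tripotent is a projective unit $u$ with $F_u$ symmetric and $S_{F_u}^*u=u$ for some symmetry; $P_k(u)=P_k(F_u)$, $U_k(u)=P_k(u)^*U$. Geometric tripotents $u,v$ are orthogonal if $u\in U_0(v)$; $u\le v$ means $F_u\subset F_v$; $v$ is minimal if $U_2(v)$ is one-dimensional. A WFS space is strongly facially symmetric if for every norm exposed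 face $F$ and every $y\in U$ with $\|y\|=1$ and $F\subset F_y$, one has $S_F^*y=y$. *)

theory Defs
  imports "HOL-Analysis.Analysis"
begin

text \<open>A complex normed space is modelled as a real normed vector space of type 'z
together with a complex scalar multiplication sm extending the real one and
satisfying the vector space axioms and absolute homogeneity of the norm.\<close>

definition complex_normed_space :: "(complex \<Rightarrow> 'z::real_normed_vector \<Rightarrow> 'z) \<Rightarrow> bool" where
  "complex_normed_space sm \<longleftrightarrow>
     (\<forall>r z. sm (complex_of_real r) z = r *\<^sub>R z) \<and>
     (\<forall>a b z. sm (a * b) z = sm a (sm b z)) \<and>
     (\<forall>a z w. sm a (z + w) = sm a z + sm a w) \<and>
     (\<forall>a b z. sm (a + b) z = sm a z + sm b z) \<and>
     (\<forall>a z. norm (sm a z) = cmod a * norm z)"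

definition dual :: "(complex \<Rightarrow> 'z::real_normed_vector \<Rightarrow> 'z) \<Rightarrow> ('z \<Rightarrow> complex) set" where
  "dual sm = {f. (\<forall>z w. f (z + w) = f z + f w) \<and> (\<forall>c z. f (sm c z) = c * f z) \<and>
                 (\<exists>K. \<forall>z. cmod (f z) \<le> K * norm z)}"

definition orth :: "'z::real_normed_vector \<Rightarrow> 'z \<Rightarrow> bool" where
  "orth f g \<longleftrightarrow> norm (f + g) = norm f + norm g \<and> norm (f - g) = norm f + norm g"

definition perp :: "'z::real_normed_vector set \<Rightarrow> 'z set" where
  "perp S = {g. \<forall>f\<in>S. orth f g}"

definition face :: "('z::real_normed_vector \<Rightarrow> complex) \<Rightarrow> 'z set" where
  "face x = {f. norm f \<le> 1 \<and> x f = 1}"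

definition norm_exposed_face :: "(complex \<Rightarrow> 'z::real_normed_vector \<Rightarrow> 'z) \<Rightarrow> 'z set \<Rightarrow> bool" where
  "norm_exposed_face sm F \<longleftrightarrow> (\<exists>x\<in>dual sm. onorm x = 1 \<and> F = face x \<and> F \<noteq> {})"

definition projective_unit :: "(complex \<Rightarrow> 'z::real_normed_vector \<Rightarrow> 'z) \<Rightarrow> ('z \<Rightarrow> complex) \<Rightarrow> bool" where
  "projective_unit sm u \<longleftrightarrow> u \<in> dual sm \<and> onorm u = 1 \<and> (\<forall>g\<in>perp (face u). u g = 0)"

definition cspan :: "(complex \<Rightarrow> 'z::real_normed_vector \<Rightarrow> 'z) \<Rightarrow> 'z set \<Rightarrow> 'z set" where
  "cspan sm F = {z. \<exists>A c. finite A \<and> A \<subseteq> F \<and> z = (\<Sum>a\<in>A. sm (c a) a)}"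

definition clsp :: "(complex \<Rightarrow> 'z::real_normed_vector \<Rightarrow> 'z) \<Rightarrow> 'z set \<Rightarrow> 'z set" where
  "clsp sm F = closure (cspan sm F)"

definition is_symmetry :: "(complex \<Rightarrow> 'z::real_normed_vector \<Rightarrow> 'z) \<Rightarrow> 'z set \<Rightarrow> ('z \<Rightarrow> 'z) \<Rightarrow> bool" where
  "is_symmetry sm F S \<longleftrightarrow>
     (\<forall>z w. S (z + w) = S z + S w) \<and> (\<forall>c z. S (sm c z) = sm c (S z)) \<and>
     (\<forall>z. norm (S z) = norm z) \<and> surj S \<and> (\<forall>z. S (S z) = z) \<and>
     {z. S z = z} = {a + b | a b. a \<in> clsp sm F \<and> b \<in> perp F} \<and>
     clsp sm F \<inter> perp F = {0}"

definition symmetric_face :: "(complex \<Rightarrow> 'z::real_normed_vector \<Rightarrow> 'z) \<Rightarrow> 'z set \<Rightarrow> bool" where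
  "symmetric_face sm F \<longleftrightarrow> norm_exposed_face sm F \<and> (\<exists>S. is_symmetry sm F S)"

definition WFS :: "(complex \<Rightarrow> 'z::real_normed_vector \<Rightarrow> 'z) \<Rightarrow> bool" where
  "WFS sm \<longleftrightarrow> (\<forall>F. norm_exposed_face sm F \<longrightarrow> symmetric_face sm F)"

text \<open>Strongly facially symmetric; the dual map S* y is y o S.\<close>
definition SFS :: "(complex \<Rightarrow> 'z::real_normed_vector \<Rightarrow> 'z) \<Rightarrow> bool" where
  "SFS sm \<longleftrightarrow> WFS sm \<and>
     (\<forall>F S y. norm_exposed_face sm F \<and> is_symmetry sm F S \<and> y \<in> dual sm \<and> onorm y = 1 \<and>
              F \<subseteq> face y \<longrightarrow> y \<circ> S = y)"

definition geometric_tripotent :: "(complex \<Rightarrow> 'z::real_normed_vector \<Rightarrow> 'z) \<Rightarrow> ('z \<Rightarrow> complex) \<Rightarrow> bool" where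
  "geometric_tripotent sm u \<longleftrightarrow> projective_unit sm u \<and> symmetric_face sm (face u) \<and>
     (\<exists>S. is_symmetry sm (face u) S \<and> u \<circ> S = u)"

definition gt_sym :: "(complex \<Rightarrow> 'z::real_normed_vector \<Rightarrow> 'z) \<Rightarrow> ('z \<Rightarrow> complex) \<Rightarrow> 'z \<Rightarrow> 'z" where
  "gt_sym sm u = (SOME S. is_symmetry sm (face u) S \<and> u \<circ> S = u)"

text \<open>P_2(u): projection onto clsp F_u with P_2 + P_0 = (I + S)/2, P_0 onto F_u-perp.\<close>
definition P2 :: "(complex \<Rightarrow> 'z::real_normed_vector \<Rightarrow> 'z) \<Rightarrow> ('z \<Rightarrow> complex) \<Rightarrow> 'z \<Rightarrow> 'z" where
  "P2 sm u z = (THE a. a \<in> clsp sm (face u) \<and>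
                   (1/2) *\<^sub>R (z + gt_sym sm u z) - a \<in> perp (face u))"

definition P0 :: "(complex \<Rightarrow> 'z::real_normed_vector \<Rightarrow> 'z) \<Rightarrow> ('z \<Rightarrow> complex) \<Rightarrow> 'z \<Rightarrow> 'z" where
  "P0 sm u z = (1/2) *\<^sub>R (z + gt_sym sm u z) - P2 sm u z"

definition U0 :: "(complex \<Rightarrow> 'z::real_normed_vector \<Rightarrow> 'z) \<Rightarrow> ('z \<Rightarrow> complex) \<Rightarrow> ('z \<Rightarrow> complex) set" where
  "U0 sm u = {x \<circ> P0 sm u | x. x \<in> dual sm}"

definition U2 :: "(complex \<Rightarrow> 'z::real_normed_vector \<Rightarrow> 'z) \<Rightarrow> ('z \<Rightarrow> complex) \<Rightarrow> ('z \<Rightarrow> complex) set" where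
  "U2 sm u = {x \<circ> P2 sm u | x. x \<in> dual sm}"

definition gt_orth :: "(complex \<Rightarrow> 'z::real_normed_vector \<Rightarrow> 'z) \<Rightarrow> ('z \<Rightarrow> complex) \<Rightarrow> ('z \<Rightarrow> complex) \<Rightarrow> bool" where
  "gt_orth sm u v \<longleftrightarrow> u \<in> U0 sm v"

definition gt_le :: "('z::real_normed_vector \<Rightarrow> complex) \<Rightarrow> ('z \<Rightarrow> complex) \<Rightarrow> bool" where
  "gt_le u v \<longleftrightarrow> face u \<subseteq> face v"

definition gt_minimal :: "(complex \<Rightarrow> 'z::real_normed_vector \<Rightarrow> 'z) \<Rightarrow> ('z \<Rightarrow> complex) \<Rightarrow> bool" where
  "gt_minimal sm v \<longleftrightarrow> (\<exists>w. w \<noteq> (\<lambda>_. 0) \<and> U2 sm v = {(\<lambda>z. c * w z) | c. True})"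

end

theory Submission
  imports Defs
begin

text \<open>Rotate \<open>z\<close> by a phase so that \<open>v\<^sub>i z \<ge> 0\<close> and average it with its image under the
  symmetry of \<open>F(v\<^sub>i)\<close>. For minimal \<open>v\<^sub>i\<close> the average is \<open>\<bar>v\<^sub>i z\<bar> f + b\<close> with \<open>f \<in> F(v\<^sub>i)\<close>
  orthogonal to \<open>b \<in> F(v\<^sub>i)\<^sup>\<perp>\<close>, and the other \<open>v\<^sub>k\<close> only see \<open>b\<close>. Induction gives
  \<open>\<Sum>\<^sub>i \<bar>v\<^sub>i z\<bar> \<le> norm z\<close>, so \<open>w = \<Sum>\<^sub>i v\<^sub>i\<close> is a norm-one functional which is \<open>1\<close> on each
  \<open>F(v\<^sub>i)\<close> and vanishes on their common orthogonal complement. Strong facial symmetry makes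
  \<open>w\<close> a geometric tripotent above all \<open>v\<^sub>i\<close>, hence \<open>F(v) \<subseteq> F(w)\<close>; it also makes \<open>w\<close> invariant
  under the symmetry of \<open>F(v)\<close>, and as \<open>w\<close> agrees with \<open>v\<close> on \<open>F(v)\<close> and on \<open>F(v)\<^sup>\<perp>\<close>, \<open>w = v\<close>.
  Minimality enters through Hahn-Banach: a one-dimensional \<open>U\<^sub>2(v\<^sub>i)\<close> forces
  \<open>clsp F(v\<^sub>i)\<close> to be one-dimensional.\<close>

text \<open>Graphs of norm-dominated real-linear functionals on subspaces; by Zorn's lemma a
  maximal one is total, which is the Hahn-Banach theorem.\<close>
definition dominated_linear_graph :: "('a::real_normed_vector \<times> real) set \<Rightarrow> bool" where
  "dominated_linear_graph G \<longleftrightarrow>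
     (\<forall>x r s. (x, r) \<in> G \<longrightarrow> (x, s) \<in> G \<longrightarrow> r = s) \<and>
     (\<forall>x r y s. (x, r) \<in> G \<longrightarrow> (y, s) \<in> G \<longrightarrow> (x + y, r + s) \<in> G) \<and>
     (\<forall>x r c. (x, r) \<in> G \<longrightarrow> (c *\<^sub>R x, c * r) \<in> G) \<and>
     (\<forall>x r. (x, r) \<in> G \<longrightarrow> r \<le> norm x)"

lemma dominated_linear_graphD:
  assumes "dominated_linear_graph G"
  shows dominated_linear_graph_unique: "\<And>x r s. (x, r) \<in> G \<Longrightarrow> (x, s) \<in> G \<Longrightarrow> r = s"
    and dominated_linear_graph_add: "\<And>x r y s. (x, r) \<in> G \<Longrightarrow> (y, s) \<in> G \<Longrightarrow> (x + y, r + s) \<in> G"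
    and dominated_linear_graph_scaleR: "\<And>x r c. (x, r) \<in> G \<Longrightarrow> (c *\<^sub>R x, c * r) \<in> G"
    and dominated_linear_graph_le_norm: "\<And>x r. (x, r) \<in> G \<Longrightarrow> r \<le> norm x"
  using assms unfolding dominated_linear_graph_def by blast+

lemma dominated_linear_graph_adjoin_value:
  assumes G: "dominated_linear_graph G" and "(0, 0) \<in> G"
  obtains c where "\<And>x r. (x, r) \<in> G \<Longrightarrow> r - norm (x - y) \<le> c"
    and "\<And>x r. (x, r) \<in> G \<Longrightarrow> c \<le> norm (x + y) - r"
proof -
  have key: "r - norm (x - y) \<le> norm (x' + y) - s" if "(x, r) \<in> G" "(x', s) \<in> G" for x r x' s
  proof -
    have "r + s \<le> norm ((x - y) + (x' + y))"
      using dominated_linear_graph_le_norm[OF G dominated_linear_graph_add[OF G that]] by simp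
    also have "\<dots> \<le> norm (x - y) + norm (x' + y)" by (rule norm_triangle_ineq)
    finally show ?thesis by simp
  qed
  define L where "L = {r - norm (x - y) | x r. (x, r) \<in> G}"
  have "L \<noteq> {}" and "bdd_above L"
    using key[OF _ \<open>(0, 0) \<in> G\<close>] \<open>(0, 0) \<in> G\<close> unfolding L_def bdd_above_def by blast+
  then show ?thesis
    by (intro that[of "Sup L"] cSup_upper cSup_least) (use key in \<open>auto simp: L_def\<close>)
qed

lemma dominated_linear_graph_adjoin_le_norm:
  assumes G: "dominated_linear_graph G" and "(x, r) \<in> G"
    and lo: "\<And>x r. (x, r) \<in> G \<Longrightarrow> r - norm (x - y) \<le> c"
    and hi: "\<And>x r. (x, r) \<in> G \<Longrightarrow> c \<le> norm (x + y) - r"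
  shows "r + t * c \<le> norm (x + t *\<^sub>R y)"
proof (cases t "0 :: real" rule: linorder_cases)
  case less
  have "(1 / -t) * r - norm ((1 / -t) *\<^sub>R x - y) \<le> c"
    using lo[OF dominated_linear_graph_scaleR[OF G \<open>(x, r) \<in> G\<close>]] .
  also have "(1 / -t) *\<^sub>R x - y = (1 / -t) *\<^sub>R (x + t *\<^sub>R y)"
    using less by (simp add: algebra_simps)
  finally have "(1 / -t) * (r - norm (x + t *\<^sub>R y)) \<le> c"
    using less by (simp add: right_diff_distrib)
  then show ?thesis using less by (simp add: field_simps)
next
  case equal
  then show ?thesis using dominated_linear_graph_le_norm[OF G \<open>(x, r) \<in> G\<close>] by simp
next
  case greater
  have "c \<le> norm ((1 / t) *\<^sub>R x + y) - (1 / t) * r"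
    using hi[OF dominated_linear_graph_scaleR[OF G \<open>(x, r) \<in> G\<close>]] .
  also have "(1 / t) *\<^sub>R x + y = (1 / t) *\<^sub>R (x + t *\<^sub>R y)"
    using greater by (simp add: algebra_simps)
  finally have "c \<le> (1 / t) * (norm (x + t *\<^sub>R y) - r)"
    using greater by (simp add: right_diff_distrib)
  then show ?thesis using greater by (simp add: field_simps)
qed

lemma dominated_linear_graph_adjoin_coordinate:
  assumes G: "dominated_linear_graph G" and y: "\<And>r. (y, r) \<notin> G"
    and "(x, r) \<in> G" "(x', r') \<in> G" and eq: "x + t *\<^sub>R y = x' + t' *\<^sub>R y"
  shows "t = t'"
proof (rule ccontr)
  assume "t \<noteq> t'"
  have "(x + (-1) *\<^sub>R x', r + (-1) * r') \<in> G"
    using assms(3,4) by (intro dominated_linear_graph_add[OF G] dominated_linear_graph_scaleR[OF G])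
  then have "(x - x', r - r') \<in> G" by simp
  then have "((1 / (t' - t)) *\<^sub>R (x - x'), (1 / (t' - t)) * (r - r')) \<in> G"
    by (rule dominated_linear_graph_scaleR[OF G])
  moreover have "x - x' = (t' - t) *\<^sub>R y" using eq by (simp add: algebra_simps)
  ultimately show False using y \<open>t \<noteq> t'\<close> by simp
qed

lemma dominated_linear_graph_adjoin:
  assumes G: "dominated_linear_graph G" and y: "\<And>r. (y, r) \<notin> G"
    and lo: "\<And>x r. (x, r) \<in> G \<Longrightarrow> r - norm (x - y) \<le> c"
    and hi: "\<And>x r. (x, r) \<in> G \<Longrightarrow> c \<le> norm (x + y) - r"
  shows "dominated_linear_graph {(x + t *\<^sub>R y, r + t * c) | x r t. (x, r) \<in> G}"
    (is "dominated_linear_graph ?G'")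
  unfolding dominated_linear_graph_def
proof (intro conjI allI impI)
  fix x r s assume "(x, r) \<in> ?G'" "(x, s) \<in> ?G'"
  then obtain x1 r1 t1 x2 r2 t2 where "(x1, r1) \<in> G" "(x2, r2) \<in> G"
    and "x = x1 + t1 *\<^sub>R y" "r = r1 + t1 * c" "x = x2 + t2 *\<^sub>R y" "s = r2 + t2 * c"
    by blast
  moreover have "t1 = t2"
    using dominated_linear_graph_adjoin_coordinate[OF G y calculation(1,2)] calculation(3,5) by simp
  ultimately show "r = s" using dominated_linear_graph_unique[OF G] by simp
next
  fix x r z s assume "(x, r) \<in> ?G'" "(z, s) \<in> ?G'"
  then obtain x1 r1 t1 x2 r2 t2 where "(x1, r1) \<in> G" "(x2, r2) \<in> G"
    and "x = x1 + t1 *\<^sub>R y" "r = r1 + t1 * c" "z = x2 + t2 *\<^sub>R y" "s = r2 + t2 * c"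
    by blast
  moreover have "(x1 + x2 + (t1 + t2) *\<^sub>R y, r1 + r2 + (t1 + t2) * c) \<in> ?G'"
    using dominated_linear_graph_add[OF G calculation(1,2)] by blast
  ultimately show "(x + z, r + s) \<in> ?G'" by (simp add: algebra_simps)
next
  fix x r d assume "(x, r) \<in> ?G'"
  then obtain x1 r1 t where "(x1, r1) \<in> G" "x = x1 + t *\<^sub>R y" "r = r1 + t * c"
    by blast
  moreover have "(d *\<^sub>R x1 + (d * t) *\<^sub>R y, d * r1 + (d * t) * c) \<in> ?G'"
    using dominated_linear_graph_scaleR[OF G calculation(1)] by blast
  ultimately show "(d *\<^sub>R x, d * r) \<in> ?G'" by (simp add: algebra_simps)
next
  fix x r assume "(x, r) \<in> ?G'"
  then show "r \<le> norm x"
    using dominated_linear_graph_adjoin_le_norm[OF G _ lo hi] by blast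
qed

lemma dominated_linear_graph_Union_chain:
  assumes "C \<in> chains {G. dominated_linear_graph G}"
  shows "dominated_linear_graph (\<Union>C)"
proof -
  have dom: "dominated_linear_graph G" if "G \<in> C" for G
    using assms that unfolding chains_def by blast
  have common: "\<exists>G\<in>C. p \<in> G \<and> q \<in> G" if "p \<in> \<Union>C" "q \<in> \<Union>C" for p q
    using that chainsD[OF assms] by blast
  show ?thesis
    unfolding dominated_linear_graph_def
  proof (intro conjI allI impI)
    fix x r s assume "(x, r) \<in> \<Union>C" "(x, s) \<in> \<Union>C"
    then obtain G where "G \<in> C" "(x, r) \<in> G" "(x, s) \<in> G" using common by blast
    then show "r = s" using dom dominated_linear_graph_unique by blast
  next
    fix x r y s assume "(x, r) \<in> \<Union>C" "(y, s) \<in> \<Union>C"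
    then obtain G where "G \<in> C" "(x, r) \<in> G" "(y, s) \<in> G" using common by blast
    then show "(x + y, r + s) \<in> \<Union>C" using dom dominated_linear_graph_add by blast
  next
    fix x r c assume "(x, r) \<in> \<Union>C"
    then obtain G where "G \<in> C" "(x, r) \<in> G" by blast
    then show "(c *\<^sub>R x, c * r) \<in> \<Union>C" using dom dominated_linear_graph_scaleR by blast
  next
    fix x r assume "(x, r) \<in> \<Union>C"
    then show "r \<le> norm x" using dom dominated_linear_graph_le_norm by blast
  qed
qed

lemma dominated_linear_graph_line:
  "dominated_linear_graph {(t *\<^sub>R d, t * norm d) | t. True}"
  unfolding dominated_linear_graph_def
proof (intro conjI allI impI)
  fix x r s assume "(x, r) \<in> {(t *\<^sub>R d, t * norm d) |t. True}" "(x, s) \<in> {(t *\<^sub>R d, t * norm d) |t. True}"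
  then obtain t1 t2 where "x = t1 *\<^sub>R d" "r = t1 * norm d" "x = t2 *\<^sub>R d" "s = t2 * norm d" by blast
  then show "r = s" by (metis mult_cancel_right norm_eq_zero scaleR_cancel_right)
next
  fix x r y s assume "(x, r) \<in> {(t *\<^sub>R d, t * norm d) |t. True}" "(y, s) \<in> {(t *\<^sub>R d, t * norm d) |t. True}"
  then obtain t1 t2 where "x = t1 *\<^sub>R d" "r = t1 * norm d" "y = t2 *\<^sub>R d" "s = t2 * norm d" by blast
  then show "(x + y, r + s) \<in> {(t *\<^sub>R d, t * norm d) |t. True}"
    by (auto intro!: exI[of _ "t1 + t2"] simp: algebra_simps)
next
  fix x r c assume "(x, r) \<in> {(t *\<^sub>R d, t * norm d) |t. True}"
  then obtain t where "x = t *\<^sub>R d" "r = t * norm d" by blast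
  then show "(c *\<^sub>R x, c * r) \<in> {(t *\<^sub>R d, t * norm d) |t. True}"
    by (auto intro!: exI[of _ "c * t"])
next
  fix x r assume "(x, r) \<in> {(t *\<^sub>R d, t * norm d) |t. True}"
  then show "r \<le> norm x" by (auto simp: mult_right_mono)
qed

lemma dominated_linear_graph_maximal_extension:
  assumes "dominated_linear_graph G"
  obtains M where "dominated_linear_graph M" "G \<subseteq> M"
    and "\<And>X. dominated_linear_graph X \<Longrightarrow> M \<subseteq> X \<Longrightarrow> X = M"
proof -
  define A where "A = {X. dominated_linear_graph X \<and> G \<subseteq> X}"
  have "\<forall>C\<in>chains A. \<exists>U\<in>A. \<forall>X\<in>C. X \<subseteq> U"
  proof
    fix C assume C: "C \<in> chains A"
    show "\<exists>U\<in>A. \<forall>X\<in>C. X \<subseteq> U"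
    proof (cases "C = {}")
      case True
      then show ?thesis using assms unfolding A_def by auto
    next
      case False
      have "C \<in> chains {X. dominated_linear_graph X}"
        using C unfolding A_def chains_def by blast
      then have "dominated_linear_graph (\<Union>C)" by (rule dominated_linear_graph_Union_chain)
      moreover have "G \<subseteq> \<Union>C" using C False unfolding A_def chains_def by blast
      ultimately show ?thesis unfolding A_def by blast
    qed
  qed
  from Zorn_Lemma2[OF this] obtain M where M: "M \<in> A" and max: "\<forall>X\<in>A. M \<subseteq> X \<longrightarrow> X = M"
    by blast
  show ?thesis
  proof (rule that)
    show "dominated_linear_graph M" "G \<subseteq> M" using M unfolding A_def by simp_all
    show "X = M" if "dominated_linear_graph X" "M \<subseteq> X" for X
      using max that \<open>G \<subseteq> M\<close> unfolding A_def by blast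
  qed
qed

lemma maximal_dominated_linear_graph_total:
  assumes M: "dominated_linear_graph M" and "(0, 0) \<in> M"
    and max: "\<And>X. dominated_linear_graph X \<Longrightarrow> M \<subseteq> X \<Longrightarrow> X = M"
  shows "\<exists>r. (y, r) \<in> M"
proof (rule ccontr)
  assume y: "\<nexists>r. (y, r) \<in> M"
  obtain c where "\<And>x r. (x, r) \<in> M \<Longrightarrow> r - norm (x - y) \<le> c"
    and "\<And>x r. (x, r) \<in> M \<Longrightarrow> c \<le> norm (x + y) - r"
    using dominated_linear_graph_adjoin_value[OF M \<open>(0, 0) \<in> M\<close>] by blast
  from dominated_linear_graph_adjoin[OF M _ this]
  have "dominated_linear_graph {(x + t *\<^sub>R y, r + t * c) | x r t. (x, r) \<in> M}"
    (is "dominated_linear_graph ?M'")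
    using y by blast
  moreover have "M \<subseteq> ?M'"
  proof
    fix p assume "p \<in> M"
    then obtain x r where "p = (x, r)" "(x, r) \<in> M" by (cases p) auto
    then have "(x + 0 *\<^sub>R y, r + 0 * c) \<in> ?M'" by blast
    then show "p \<in> ?M'" using \<open>p = (x, r)\<close> by simp
  qed
  ultimately have "?M' = M" by (rule max)
  moreover have "(0 + 1 *\<^sub>R y, 0 + 1 * c) \<in> ?M'" using \<open>(0, 0) \<in> M\<close> by blast
  ultimately show False using y by simp
qed

lemma total_dominated_linear_graph_functional:
  assumes M: "dominated_linear_graph M" and total: "\<And>y. \<exists>r. (y, r) \<in> M"
  obtains \<phi> :: "'a::real_normed_vector \<Rightarrow> real"
  where "linear \<phi>" "\<And>z. \<bar>\<phi> z\<bar> \<le> norm z" "\<And>y r. (y, r) \<in> M \<Longrightarrow> \<phi> y = r"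
proof -
  define \<phi> where "\<phi> y = (THE r. (y, r) \<in> M)" for y
  have graph: "(y, \<phi> y) \<in> M" for y
  proof -
    obtain s where s: "(y, s) \<in> M" using total by blast
    then have "\<phi> y = s"
      unfolding \<phi>_def by (rule the_equality) (use s dominated_linear_graph_unique[OF M] in blast)
    with s show ?thesis by simp
  qed
  have \<phi>_eqI: "\<phi> y = r" if "(y, r) \<in> M" for y r
    using dominated_linear_graph_unique[OF M that graph] by simp
  show ?thesis
  proof
    show "linear \<phi>"
      by (rule linearI)
        (simp_all add: \<phi>_eqI dominated_linear_graph_add[OF M graph graph]
          dominated_linear_graph_scaleR[OF M graph])
    show "\<bar>\<phi> z\<bar> \<le> norm z" for z
    proof -
      have "\<phi> (- z) = - \<phi> z"
        using \<phi>_eqI[OF dominated_linear_graph_scaleR[OF M graph, where c="-1"]] by simp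
      then show ?thesis
        using dominated_linear_graph_le_norm[OF M graph, of z]
          dominated_linear_graph_le_norm[OF M graph, of "-z"]
        by simp
    qed
  qed (rule \<phi>_eqI)
qed

lemma norming_functional_exists:
  fixes d :: "'a::real_normed_vector"
  obtains \<phi> :: "'a \<Rightarrow> real" where "linear \<phi>" "\<And>z. \<bar>\<phi> z\<bar> \<le> norm z" "\<phi> d = norm d"
proof -
  obtain M where M: "dominated_linear_graph M" and line: "{(t *\<^sub>R d, t * norm d) | t. True} \<subseteq> M"
    and max: "\<And>X. dominated_linear_graph X \<Longrightarrow> M \<subseteq> X \<Longrightarrow> X = M"
    using dominated_linear_graph_maximal_extension[OF dominated_linear_graph_line] by blast
  have "(t *\<^sub>R d, t * norm d) \<in> M" for t using line by blast
  from this[of 1] this[of 0] have "(d, norm d) \<in> M" "(0, 0) \<in> M" by simp_all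
  have "\<exists>r. (y, r) \<in> M" for y by (rule maximal_dominated_linear_graph_total[OF M \<open>(0, 0) \<in> M\<close> max])
  then obtain \<phi> where "linear \<phi>" "\<And>z. \<bar>\<phi> z\<bar> \<le> norm z" "\<phi> d = norm d"
    using total_dominated_linear_graph_functional[OF M] \<open>(d, norm d) \<in> M\<close> by metis
  then show ?thesis by (rule that)
qed

lemma zero_in_perp: "0 \<in> perp F"
  unfolding perp_def orth_def by simp

lemma perp_antimono: "A \<subseteq> B \<Longrightarrow> perp B \<subseteq> perp A"
  unfolding perp_def by blast

lemma orth_scaleR_add_norm_ge:
  fixes f b :: "'a::real_normed_vector"
  assumes "orth f b" "0 \<le> t"
  shows "t * norm f + norm b \<le> norm (t *\<^sub>R f + b)"
proof -
  have fb: "norm (f + b) = norm f + norm b" using assms(1) unfolding orth_def by simp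
  show ?thesis
  proof (cases "t \<ge> 1")
    case True
    have "t * (norm f + norm b) = norm (t *\<^sub>R (f + b))" using fb assms(2) by simp
    also have "t *\<^sub>R (f + b) = (t *\<^sub>R f + b) + (t - 1) *\<^sub>R b" by (simp add: algebra_simps)
    also have "norm \<dots> \<le> norm (t *\<^sub>R f + b) + (t - 1) * norm b"
      by (rule order_trans[OF norm_triangle_ineq]) (use True in simp)
    finally show ?thesis by (simp add: algebra_simps)
  next
    case False
    have "norm f + norm b = norm (f + b)" using fb by simp
    also have "f + b = (t *\<^sub>R f + b) + (1 - t) *\<^sub>R f" by (simp add: algebra_simps)
    also have "norm \<dots> \<le> norm (t *\<^sub>R f + b) + (1 - t) * norm f"
      by (rule order_trans[OF norm_triangle_ineq]) (use False in simp)
    finally show ?thesis by (simp add: algebra_simps)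
  qed
qed

lemma unimodular_phase: "\<exists>\<mu>. cmod \<mu> = 1 \<and> \<mu> * x = complex_of_real (cmod x)"
proof (cases "x = 0")
  case False
  have "cnj x * x = complex_of_real (cmod x) ^ 2"
    using complex_norm_square[of x] by (simp add: mult.commute)
  then have "(cnj x / complex_of_real (cmod x)) * x = complex_of_real (cmod x)"
    using False by (simp add: power2_eq_square)
  moreover have "cmod (cnj x / complex_of_real (cmod x)) = 1" using False by (simp add: norm_divide)
  ultimately show ?thesis by blast
qed (intro exI[of _ 1], simp)

context
  fixes sm :: "complex \<Rightarrow> 'z::real_normed_vector \<Rightarrow> 'z"
  assumes cns: "complex_normed_space sm"
begin

lemma sm_of_real: "sm (complex_of_real r) z = r *\<^sub>R z"
  and sm_mult: "sm (a * b) z = sm a (sm b z)"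
  and sm_add: "sm a (z + w) = sm a z + sm a w"
  and sm_add_left: "sm (a + b) z = sm a z + sm b z"
  and norm_sm: "norm (sm a z) = cmod a * norm z"
  using cns unfolding complex_normed_space_def by blast+

lemma sm_zero_left: "sm 0 z = 0"
  using sm_of_real[of 0 z] by simp

lemma sm_one: "sm 1 z = z"
  using sm_of_real[of 1 z] by simp

lemma sm_diff_left: "sm (a - b) z = sm a z - sm b z"
  using sm_add_left[of "a - b" b z] by (simp add: algebra_simps)

lemma sm_eq_Re_Im: "sm c z = Re c *\<^sub>R z + Im c *\<^sub>R sm \<i> z"
proof -
  from complex_eq[of c]
  have "sm c z = sm (complex_of_real (Re c) + complex_of_real (Im c) * \<i>) z"
    by (simp only: mult.commute)
  then show ?thesis by (simp only: sm_add_left sm_mult sm_of_real)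
qed

lemma dual_add: "x \<in> dual sm \<Longrightarrow> x (z + w) = x z + x w"
  and dual_sm: "x \<in> dual sm \<Longrightarrow> x (sm c z) = c * x z"
  unfolding dual_def by blast+

lemma dual_scaleR: "x \<in> dual sm \<Longrightarrow> x (r *\<^sub>R z) = complex_of_real r * x z"
  using dual_sm[of x "complex_of_real r" z] by (simp add: sm_of_real)

lemma bounded_linear_dual:
  assumes "x \<in> dual sm"
  shows "bounded_linear x"
proof -
  obtain K where K: "\<And>z. cmod (x z) \<le> K * norm z" using assms unfolding dual_def by blast
  show ?thesis
    by (rule bounded_linear_intro[of _ K])
      (auto simp: dual_add[OF assms] dual_scaleR[OF assms] scaleR_conv_of_real K mult.commute)
qed

lemma dual_zero: "x \<in> dual sm \<Longrightarrow> x 0 = 0"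
  using bounded_linear_dual linear_0 bounded_linear.linear by blast

lemma dual_diff: "x \<in> dual sm \<Longrightarrow> x (z - w) = x z - x w"
  using bounded_linear_dual linear_diff bounded_linear.linear by blast

lemma dual_sum: "x \<in> dual sm \<Longrightarrow> x (sum g A) = (\<Sum>a\<in>A. x (g a))"
  using bounded_linear_dual real_vector.linear_sum bounded_linear.linear by blast

lemma dual_norm_le: "x \<in> dual sm \<Longrightarrow> onorm x = 1 \<Longrightarrow> cmod (x z) \<le> norm z"
  using onorm[OF bounded_linear_dual, of x z] by simp

lemma dual_midpoint_eq:
  assumes "x \<in> dual sm" "x \<circ> S = x"
  shows "x ((1/2) *\<^sub>R (z + S z)) = x z"
proof -
  have "x (S z) = x z" using assms(2) by (metis comp_apply)
  then show ?thesis by (simp add: dual_scaleR[OF assms(1)] dual_add[OF assms(1)])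
qed

lemma dual_separates_points:
  assumes "d \<noteq> 0"
  obtains x where "x \<in> dual sm" "x d \<noteq> 0"
proof -
  obtain \<phi> :: "'z \<Rightarrow> real" where \<phi>: "linear \<phi>" and bound: "\<And>z. \<bar>\<phi> z\<bar> \<le> norm z"
    and "\<phi> d = norm d"
    using norming_functional_exists by blast
  define x where "x z = complex_of_real (\<phi> z) - \<i> * complex_of_real (\<phi> (sm \<i> z))" for z
  have "x \<in> dual sm"
    unfolding dual_def mem_Collect_eq
  proof (intro conjI allI exI)
    show "x (z + w) = x z + x w" for z w
      unfolding x_def by (simp add: sm_add linear_add[OF \<phi>] algebra_simps)
  next
    fix c z
    have "sm \<i> (sm c z) = Re c *\<^sub>R sm \<i> z - Im c *\<^sub>R z"
      using sm_eq_Re_Im[of "\<i> * c" z] by (simp add: sm_mult[symmetric] mult.commute)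
    then have "\<phi> (sm \<i> (sm c z)) = Re c * \<phi> (sm \<i> z) - Im c * \<phi> z"
      by (simp add: linear_diff[OF \<phi>] linear_scale[OF \<phi>])
    moreover have "\<phi> (sm c z) = Re c * \<phi> z + Im c * \<phi> (sm \<i> z)"
      by (simp add: sm_eq_Re_Im[of c z] linear_add[OF \<phi>] linear_scale[OF \<phi>])
    ultimately show "x (sm c z) = c * x z"
      unfolding x_def by (simp add: complex_eq_iff algebra_simps)
  next
    fix z
    have "cmod (x z) \<le> \<bar>\<phi> z\<bar> + \<bar>\<phi> (sm \<i> z)\<bar>"
      unfolding x_def
      using norm_triangle_ineq4[of "complex_of_real (\<phi> z)" "\<i> * complex_of_real (\<phi> (sm \<i> z))"]
      by (simp add: norm_mult)
    also have "\<dots> \<le> 2 * norm z" using bound[of z] bound[of "sm \<i> z"] by (simp add: norm_sm)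
    finally show "cmod (x z) \<le> 2 * norm z" .
  qed
  moreover have "Re (x d) = norm d" unfolding x_def by (simp add: \<open>\<phi> d = norm d\<close>)
  then have "x d \<noteq> 0" using assms by auto
  ultimately show ?thesis using that by blast
qed

lemma face_norm_eq_1:
  assumes "x \<in> dual sm" "onorm x = 1" "f \<in> face x"
  shows "norm f = 1"
  using assms dual_norm_le[OF assms(1,2), of f] unfolding face_def by simp

lemma cspan_extend:
  assumes "finite C" "A \<subseteq> C"
  shows "(\<Sum>p\<in>A. sm (g p) p) = (\<Sum>p\<in>C. sm (if p \<in> A then g p else 0) p)"
  by (rule sum.mono_neutral_cong_left) (use assms in \<open>auto simp: sm_zero_left\<close>)

lemma cspan_diff:
  assumes "a \<in> cspan sm F" "b \<in> cspan sm F"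
  shows "a - b \<in> cspan sm F"
proof -
  obtain A c where A: "finite A" "A \<subseteq> F" "a = (\<Sum>p\<in>A. sm (c p) p)"
    using assms(1) unfolding cspan_def by blast
  obtain B e where B: "finite B" "B \<subseteq> F" "b = (\<Sum>p\<in>B. sm (e p) p)"
    using assms(2) unfolding cspan_def by blast
  let ?c = "\<lambda>p. if p \<in> A then c p else 0" and ?e = "\<lambda>p. if p \<in> B then e p else 0"
  have "a - b = (\<Sum>p\<in>A \<union> B. sm (?c p) p - sm (?e p) p)"
    using A B cspan_extend[of "A \<union> B" A c] cspan_extend[of "A \<union> B" B e]
    by (simp add: sum_subtractf)
  also have "\<dots> = (\<Sum>p\<in>A \<union> B. sm (?c p - ?e p) p)"
    by (simp only: sm_diff_left)
  finally show ?thesis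
    unfolding cspan_def using A(1,2) B(1,2)
    by (intro CollectI exI[of _ "A \<union> B"] exI[of _ "\<lambda>p. ?c p - ?e p"]) auto
qed

lemma clsp_diff:
  assumes "a \<in> clsp sm F" "b \<in> clsp sm F"
  shows "a - b \<in> clsp sm F"
proof -
  obtain xa where xa: "\<And>n. xa n \<in> cspan sm F" "xa \<longlonglongrightarrow> a"
    using assms(1) unfolding clsp_def closure_sequential by blast
  obtain xb where xb: "\<And>n. xb n \<in> cspan sm F" "xb \<longlonglongrightarrow> b"
    using assms(2) unfolding clsp_def closure_sequential by blast
  have "\<forall>n. xa n - xb n \<in> cspan sm F" using xa xb cspan_diff by blast
  moreover have "(\<lambda>n. xa n - xb n) \<longlonglongrightarrow> a - b" using xa xb by (intro tendsto_diff)
  ultimately show ?thesis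
    unfolding clsp_def closure_sequential by (intro exI[of _ "\<lambda>n. xa n - xb n"]) simp
qed

lemma clsp_superset: "F \<subseteq> clsp sm F"
proof
  fix f assume "f \<in> F"
  have "f = (\<Sum>p\<in>{f}. sm 1 p)" by (simp add: sm_one)
  then have "f \<in> cspan sm F"
    unfolding cspan_def using \<open>f \<in> F\<close> by (intro CollectI exI[of _ "{f}"] exI[of _ "\<lambda>_. 1"]) simp
  then show "f \<in> clsp sm F" unfolding clsp_def using closure_subset by blast
qed

lemma dual_eq_on_clsp:
  assumes "x \<in> dual sm" "y \<in> dual sm" "\<And>f. f \<in> F \<Longrightarrow> x f = y f"
  shows "a \<in> clsp sm F \<Longrightarrow> x a = y a"
proof -
  have "clsp sm F \<subseteq> {a. x a = y a}"
    unfolding clsp_def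
  proof (rule closure_minimal)
    show "closed {a. x a = y a}"
      using bounded_linear_dual[OF assms(1)] bounded_linear_dual[OF assms(2)]
      by (intro closed_Collect_eq) (simp_all add: linear_continuous_on)
    show "cspan sm F \<subseteq> {a. x a = y a}"
      using assms(3) unfolding cspan_def
      by (auto simp: dual_sum[OF assms(1)] dual_sum[OF assms(2)] dual_sm[OF assms(1)] dual_sm[OF assms(2)]
          subset_eq intro!: sum.cong)
  qed
  then show "a \<in> clsp sm F \<Longrightarrow> x a = y a" by blast
qed

lemma is_symmetryD:
  assumes "is_symmetry sm F S"
  shows symmetry_add: "S (z + w) = S z + S w"
    and symmetry_sm: "S (sm c z) = sm c (S z)"
    and norm_symmetry: "norm (S z) = norm z"
    and symmetry_involutive: "S (S z) = z"
    and symmetry_fixed_points: "{z. S z = z} = {a + b | a b. a \<in> clsp sm F \<and> b \<in> perp F}"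
    and clsp_inter_perp: "clsp sm F \<inter> perp F = {0}"
  using assms unfolding is_symmetry_def by simp_all

lemma symmetry_scaleR: "is_symmetry sm F S \<Longrightarrow> S (r *\<^sub>R z) = r *\<^sub>R S z"
  using symmetry_sm[of F S "complex_of_real r" z] by (simp add: sm_of_real)

lemma symmetry_fixes_clsp:
  assumes "is_symmetry sm F S" "a \<in> clsp sm F"
  shows "S a = a"
proof -
  have "a + 0 \<in> {a + b | a b. a \<in> clsp sm F \<and> b \<in> perp F}"
    using assms(2) zero_in_perp by blast
  then have "a \<in> {z. S z = z}" unfolding symmetry_fixed_points[OF assms(1)] by simp
  then show ?thesis by simp
qed

lemma symmetry_midpoint_decomp:
  assumes "is_symmetry sm F S"
  obtains a b where "(1/2) *\<^sub>R (z + S z) = a + b" "a \<in> clsp sm F" "b \<in> perp F"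
proof -
  have "S ((1/2) *\<^sub>R (z + S z)) = (1/2) *\<^sub>R (z + S z)"
    by (simp add: symmetry_scaleR[OF assms] symmetry_add[OF assms] symmetry_involutive[OF assms])
  then show ?thesis using that symmetry_fixed_points[OF assms] by blast
qed

lemma norm_symmetry_midpoint_le:
  assumes "is_symmetry sm F S"
  shows "norm ((1/2) *\<^sub>R (z + S z)) \<le> norm z"
  using norm_triangle_ineq[of z "S z"] by (simp add: norm_symmetry[OF assms])

lemma geometric_tripotentD:
  assumes "geometric_tripotent sm u"
  shows gt_dual: "u \<in> dual sm"
    and gt_onorm: "onorm u = 1"
    and gt_vanishes_perp: "\<And>g. g \<in> perp (face u) \<Longrightarrow> u g = 0"
    and gt_norm_exposed_face: "norm_exposed_face sm (face u)"
    and gt_face_nonempty: "face u \<noteq> {}"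
  using assms
  unfolding geometric_tripotent_def projective_unit_def symmetric_face_def norm_exposed_face_def
  by blast+

lemma
  assumes "geometric_tripotent sm u"
  shows gt_sym_symmetry: "is_symmetry sm (face u) (gt_sym sm u)"
    and gt_sym_invariant: "u \<circ> gt_sym sm u = u"
proof -
  have "\<exists>S. is_symmetry sm (face u) S \<and> u \<circ> S = u"
    using assms unfolding geometric_tripotent_def by blast
  then have "is_symmetry sm (face u) (gt_sym sm u) \<and> u \<circ> gt_sym sm u = u"
    unfolding gt_sym_def by (rule someI_ex)
  then show "is_symmetry sm (face u) (gt_sym sm u)" "u \<circ> gt_sym sm u = u" by blast+
qed

lemma P2_eq_self:
  assumes "geometric_tripotent sm u" "a \<in> clsp sm (face u)"
  shows "P2 sm u a = a"
proof -
  note S = gt_sym_symmetry[OF assms(1)]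
  have midpoint: "(1/2) *\<^sub>R (a + gt_sym sm u a) = a"
    using symmetry_fixes_clsp[OF S assms(2)] by (simp add: scaleR_2[symmetric])
  show ?thesis
    unfolding P2_def midpoint
  proof (rule the_equality)
    show "a \<in> clsp sm (face u) \<and> a - a \<in> perp (face u)" using assms(2) zero_in_perp by simp
  next
    fix a' assume "a' \<in> clsp sm (face u) \<and> a - a' \<in> perp (face u)"
    with clsp_diff[OF assms(2)] have "a - a' \<in> clsp sm (face u) \<inter> perp (face u)" by blast
    then show "a' = a" using clsp_inter_perp[OF S] by simp
  qed
qed

lemma P0_eq_0:
  assumes "geometric_tripotent sm u" "a \<in> clsp sm (face u)"
  shows "P0 sm u a = 0"
  using symmetry_fixes_clsp[OF gt_sym_symmetry[OF assms(1)] assms(2)] P2_eq_self[OF assms]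
  unfolding P0_def by (simp add: scaleR_2[symmetric])

lemma P0_gt_sym:
  assumes "geometric_tripotent sm u"
  shows "P0 sm u (gt_sym sm u z) = P0 sm u z"
  unfolding P0_def P2_def
  by (simp add: symmetry_involutive[OF gt_sym_symmetry[OF assms]] add.commute)

lemma gt_orth_gt_sym_invariant:
  assumes "geometric_tripotent sm u" "gt_orth sm u' u"
  shows "u' \<circ> gt_sym sm u = u'"
  using assms(2) P0_gt_sym[OF assms(1)] unfolding gt_orth_def U0_def by (auto simp: fun_eq_iff)

lemma gt_orth_vanishes_clsp:
  assumes "geometric_tripotent sm u" "gt_orth sm u' u" "a \<in> clsp sm (face u)"
  shows "u' a = 0"
  using assms(2) P0_eq_0[OF assms(1,3)] dual_zero unfolding gt_orth_def U0_def by auto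

text \<open>Since \<open>U\<^sub>2(u)\<close> is one-dimensional and \<open>P\<^sub>2(u)\<close> is the identity on \<open>clsp F(u)\<close>,
  all functionals restricted to \<open>clsp F(u)\<close> are proportional; Hahn-Banach then makes
  \<open>clsp F(u)\<close> one-dimensional.\<close>
lemma minimal_gt_clsp_eq:
  assumes gt: "geometric_tripotent sm u" and "gt_minimal sm u"
    and f: "f \<in> face u" and a: "a \<in> clsp sm (face u)"
  shows "a = sm (u a) f"
proof -
  obtain w where U2: "U2 sm u = {(\<lambda>z. c * w z) | c. True}"
    using \<open>gt_minimal sm u\<close> unfolding gt_minimal_def by blast
  have proportional: "\<exists>c. x a = c * w a \<and> x f = c * w f" if "x \<in> dual sm" for x
  proof -
    have "x \<circ> P2 sm u \<in> U2 sm u" unfolding U2_def using that by blast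
    then obtain c where "\<And>z. x (P2 sm u z) = c * w z" using U2 by (auto simp: fun_eq_iff)
    then show ?thesis
      using P2_eq_self[OF gt a] P2_eq_self[OF gt clsp_superset[THEN subsetD, OF f]] by metis
  qed
  have "u f = 1" using f unfolding face_def by simp
  then have "w f \<noteq> 0" using proportional[OF gt_dual[OF gt]] by auto
  define \<mu> where "\<mu> = w a / w f"
  have "a - sm \<mu> f = 0"
  proof (rule ccontr)
    assume "a - sm \<mu> f \<noteq> 0"
    then obtain x where x: "x \<in> dual sm" "x (a - sm \<mu> f) \<noteq> 0" by (rule dual_separates_points)
    obtain c where "x a = c * w a" "x f = c * w f" using proportional[OF x(1)] by blast
    then have "x (a - sm \<mu> f) = 0"
      using \<open>w f \<noteq> 0\<close> by (simp add: dual_diff[OF x(1)] dual_sm[OF x(1)] \<mu>_def)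
    with x(2) show False by simp
  qed
  then have "a = sm \<mu> f" by simp
  moreover from this have "u a = \<mu>" using dual_sm[OF gt_dual[OF gt]] \<open>u f = 1\<close> by simp
  ultimately show ?thesis by simp
qed

lemma onorm_eq_1:
  assumes "x \<in> dual sm" "\<And>z. cmod (x z) \<le> norm z" "face x \<noteq> {}"
  shows "onorm x = 1"
proof (rule antisym)
  show "onorm x \<le> 1" using assms(2) by (intro onorm_bound) simp_all
  obtain f where "norm f \<le> 1" "x f = 1" using assms(3) unfolding face_def by blast
  moreover have "norm (x f) / norm f \<le> onorm x" by (rule le_onorm[OF bounded_linear_dual[OF assms(1)]])
  ultimately show "1 \<le> onorm x" using assms(2)[of f] by simp
qed

text \<open>With \<open>z' = \<mu> z\<close> rotated so that \<open>u z' \<ge> 0\<close>, the average of \<open>z'\<close> under the symmetry of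
  \<open>F(u)\<close> is \<open>\<bar>u z\<bar> f + b\<close> with \<open>f \<in> F(u)\<close> orthogonal to \<open>b \<in> F(u)\<^sup>\<perp>\<close>.\<close>
lemma minimal_gt_estimate:
  assumes gt: "geometric_tripotent sm u" and "gt_minimal sm u"
  obtains \<mu> b where "cmod \<mu> = 1" "cmod (u z) + norm b \<le> norm z"
    and "\<And>u'. u' \<in> dual sm \<Longrightarrow> gt_orth sm u' u \<Longrightarrow> u' b = \<mu> * u' z"
proof -
  note S = gt_sym_symmetry[OF gt]
  obtain f where f: "f \<in> face u" using gt_face_nonempty[OF gt] by blast
  obtain \<mu> where \<mu>: "cmod \<mu> = 1" "\<mu> * u z = complex_of_real (cmod (u z))"
    using unimodular_phase by blast
  define z' where "z' = sm \<mu> z"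
  obtain a b where ab: "(1/2) *\<^sub>R (z' + gt_sym sm u z') = a + b" "a \<in> clsp sm (face u)"
    "b \<in> perp (face u)"
    using symmetry_midpoint_decomp[OF S] by blast
  have split: "u' z' = u' a + u' b" if "u' \<in> dual sm" "u' \<circ> gt_sym sm u = u'" for u'
    using dual_midpoint_eq[OF that, of z'] ab(1) dual_add[OF that(1)] by simp
  have "u a = complex_of_real (cmod (u z))"
    using split[OF gt_dual[OF gt] gt_sym_invariant[OF gt]] gt_vanishes_perp[OF gt ab(3)] \<mu>(2)
    by (simp add: z'_def dual_sm[OF gt_dual[OF gt]])
  then have "a = cmod (u z) *\<^sub>R f"
    using minimal_gt_clsp_eq[OF gt \<open>gt_minimal sm u\<close> f ab(2)] by (simp add: sm_of_real)
  moreover have "orth f b" using ab(3) f unfolding perp_def by blast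
  ultimately have "cmod (u z) + norm b \<le> norm (a + b)"
    using orth_scaleR_add_norm_ge[of f b "cmod (u z)"] face_norm_eq_1[OF gt_dual[OF gt] gt_onorm[OF gt] f]
    by simp
  also have "\<dots> \<le> norm z'"
    using norm_symmetry_midpoint_le[OF S, of z'] by (simp only: ab(1))
  also have "\<dots> = norm z" using \<mu>(1) by (simp add: z'_def norm_sm)
  finally have "cmod (u z) + norm b \<le> norm z" .
  moreover have "u' b = \<mu> * u' z" if "u' \<in> dual sm" "gt_orth sm u' u" for u'
    using split[OF that(1) gt_orth_gt_sym_invariant[OF gt that(2)]]
      gt_orth_vanishes_clsp[OF gt that(2) ab(2)]
    by (simp add: z'_def dual_sm[OF that(1)])
  ultimately show ?thesis using that \<mu>(1) by blast
qed

lemma orthogonal_minimal_gts_sum_le_norm: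
  fixes vs :: "'i \<Rightarrow> 'z \<Rightarrow> complex"
  assumes "finite A"
    and "\<And>i. i \<in> A \<Longrightarrow> geometric_tripotent sm (vs i)"
    and "\<And>i. i \<in> A \<Longrightarrow> gt_minimal sm (vs i)"
    and "\<And>i j. i \<in> A \<Longrightarrow> j \<in> A \<Longrightarrow> i \<noteq> j \<Longrightarrow> gt_orth sm (vs i) (vs j)"
    and "\<And>i. i \<in> A \<Longrightarrow> cmod (c i) \<le> 1"
  shows "cmod (\<Sum>i\<in>A. c i * vs i z) \<le> norm z"
  using assms
proof (induction A arbitrary: z rule: finite_induct)
  case empty
  then show ?case by simp
next
  case (insert j A)
  obtain \<mu> b where \<mu>: "cmod \<mu> = 1" and le: "cmod (vs j z) + norm b \<le> norm z"
    and orth: "\<And>u'. u' \<in> dual sm \<Longrightarrow> gt_orth sm u' (vs j) \<Longrightarrow> u' b = \<mu> * u' z"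
    using minimal_gt_estimate[OF insert.prems(1,2)[of j]] by blast
  have "vs i b = \<mu> * vs i z" if "i \<in> A" for i
  proof -
    have "i \<noteq> j" using that insert.hyps(2) by blast
    then show ?thesis using orth[OF gt_dual[OF insert.prems(1)] insert.prems(3)] that by simp
  qed
  then have "\<mu> * (\<Sum>i\<in>A. c i * vs i z) = (\<Sum>i\<in>A. c i * vs i b)"
    unfolding sum_distrib_left by (simp add: mult.left_commute)
  then have "cmod (\<Sum>i\<in>A. c i * vs i z) = cmod (\<Sum>i\<in>A. c i * vs i b)"
    by (metis \<mu> mult_1 norm_mult)
  also have "\<dots> \<le> norm b" by (rule insert.IH) (use insert.prems in auto)
  finally have "cmod (\<Sum>i\<in>A. c i * vs i z) \<le> norm b" .
  moreover have "cmod (c j * vs j z) \<le> cmod (vs j z)"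
    using insert.prems(4)[of j] by (simp add: norm_mult mult_left_le_one_le)
  ultimately show ?case
    using insert.hyps le norm_triangle_ineq[of "c j * vs j z" "\<Sum>i\<in>A. c i * vs i z"] by simp
qed

lemma orthogonal_minimal_gts_sum_cmod_le_norm:
  fixes vs :: "'i \<Rightarrow> 'z \<Rightarrow> complex"
  assumes "finite A"
    and "\<And>i. i \<in> A \<Longrightarrow> geometric_tripotent sm (vs i)"
    and "\<And>i. i \<in> A \<Longrightarrow> gt_minimal sm (vs i)"
    and "\<And>i j. i \<in> A \<Longrightarrow> j \<in> A \<Longrightarrow> i \<noteq> j \<Longrightarrow> gt_orth sm (vs i) (vs j)"
  shows "(\<Sum>i\<in>A. cmod (vs i z)) \<le> norm z"
proof -
  have "\<forall>i. \<exists>\<mu>. cmod \<mu> = 1 \<and> \<mu> * vs i z = complex_of_real (cmod (vs i z))"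
    using unimodular_phase by blast
  from choice[OF this] obtain c
    where c: "\<And>i. cmod (c i) = 1 \<and> c i * vs i z = complex_of_real (cmod (vs i z))"
    by blast
  have "(\<Sum>i\<in>A. cmod (vs i z)) = cmod (\<Sum>i\<in>A. c i * vs i z)"
    by (simp add: c sum_nonneg flip: of_real_sum)
  also have "\<dots> \<le> norm z"
    by (rule orthogonal_minimal_gts_sum_le_norm) (use assms c in auto)
  finally show ?thesis .
qed

lemma dual_suminf:
  fixes vs :: "nat \<Rightarrow> 'z \<Rightarrow> complex"
  assumes dual: "\<And>i. vs i \<in> dual sm" and bound: "\<And>n z. (\<Sum>i<n. cmod (vs i z)) \<le> norm z"
  shows "(\<lambda>z. \<Sum>i. vs i z) \<in> dual sm" and "(\<lambda>i. vs i z) sums (\<Sum>i. vs i z)"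
    and "cmod (\<Sum>i. vs i z) \<le> norm z"
proof -
  have abs: "summable (\<lambda>i. cmod (vs i z))" for z
    using bound by (intro summableI_nonneg_bounded[of _ "norm z"]) auto
  then have summable: "summable (\<lambda>i. vs i z)" for z by (rule summable_norm_cancel)
  then show "(\<lambda>i. vs i z) sums (\<Sum>i. vs i z)" by (rule summable_sums)
  have le: "cmod (\<Sum>i. vs i z) \<le> norm z" for z
    using summable_norm[OF abs] suminf_le_const[OF abs bound] by (rule order_trans)
  then show "cmod (\<Sum>i. vs i z) \<le> norm z" .
  show "(\<lambda>z. \<Sum>i. vs i z) \<in> dual sm"
    unfolding dual_def mem_Collect_eq
  proof (intro conjI allI exI[of _ 1])
    show "(\<Sum>i. vs i (z + w)) = (\<Sum>i. vs i z) + (\<Sum>i. vs i w)" for z w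
      by (simp add: dual_add[OF dual] suminf_add[OF summable summable])
    show "(\<Sum>i. vs i (sm c z)) = c * (\<Sum>i. vs i z)" for c z
      by (simp add: dual_sm[OF dual] suminf_mult[OF summable])
  qed (simp add: le)
qed

lemma SFS_invariant:
  assumes "SFS sm" "norm_exposed_face sm F" "is_symmetry sm F S" "y \<in> dual sm" "onorm y = 1"
    "F \<subseteq> face y"
  shows "y \<circ> S = y"
  using assms unfolding SFS_def by blast

lemma SFS_symmetric_face:
  assumes "SFS sm" "norm_exposed_face sm F"
  shows "symmetric_face sm F"
  using assms unfolding SFS_def WFS_def by blast

lemma SFS_projective_unit_gt:
  assumes "SFS sm" and w: "projective_unit sm w" and "face w \<noteq> {}"
  shows "geometric_tripotent sm w"
proof -
  have "norm_exposed_face sm (face w)"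
    using w \<open>face w \<noteq> {}\<close> unfolding projective_unit_def norm_exposed_face_def by blast
  then have "symmetric_face sm (face w)" by (rule SFS_symmetric_face[OF assms(1)])
  then obtain S where S: "is_symmetry sm (face w) S" unfolding symmetric_face_def by blast
  have "w \<circ> S = w"
    using w by (intro SFS_invariant[OF assms(1) \<open>norm_exposed_face sm (face w)\<close> S])
      (simp_all add: projective_unit_def)
  with w S \<open>symmetric_face sm (face w)\<close> show ?thesis unfolding geometric_tripotent_def by blast
qed

text \<open>Strong facial symmetry makes \<open>w\<close> invariant under the symmetry of \<open>F(v)\<close>, so \<open>w\<close> and
  \<open>v\<close> are determined by their values on \<open>clsp F(v)\<close> and \<open>F(v)\<^sup>\<perp>\<close>.\<close>
lemma SFS_dual_eq_gt:
  assumes "SFS sm" and v: "geometric_tripotent sm v" and w: "w \<in> dual sm" "onorm w = 1"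
    and "face v \<subseteq> face w" and perp: "\<And>b. b \<in> perp (face v) \<Longrightarrow> w b = 0"
  shows "w = v"
proof
  fix z
  note S = gt_sym_symmetry[OF v]
  have w_inv: "w \<circ> gt_sym sm v = w"
    by (rule SFS_invariant[OF assms(1) gt_norm_exposed_face[OF v] S w assms(5)])
  obtain a b where ab: "(1/2) *\<^sub>R (z + gt_sym sm v z) = a + b" "a \<in> clsp sm (face v)"
    "b \<in> perp (face v)"
    using symmetry_midpoint_decomp[OF S] by blast
  have "w f = v f" if "f \<in> face v" for f
  proof -
    have "f \<in> face w" using that \<open>face v \<subseteq> face w\<close> by blast
    with that show ?thesis unfolding face_def by simp
  qed
  then have "w a = v a" by (rule dual_eq_on_clsp[OF w(1) gt_dual[OF v] _ ab(2)])
  have "w z = w (a + b)" using dual_midpoint_eq[OF w(1) w_inv, of z] by (simp only: ab(1))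
  also have "\<dots> = v a" using dual_add[OF w(1)] perp[OF ab(3)] \<open>w a = v a\<close> by simp
  also have "\<dots> = v (a + b)" using dual_add[OF gt_dual[OF v]] gt_vanishes_perp[OF v ab(3)] by simp
  also have "\<dots> = v z"
    using dual_midpoint_eq[OF gt_dual[OF v] gt_sym_invariant[OF v], of z] by (simp only: ab(1))
  finally show "w z = v z" .
qed

lemma orthogonal_minimal_gts_suminf:
  fixes vs :: "nat \<Rightarrow> 'z \<Rightarrow> complex"
  assumes "SFS sm" and gt: "\<And>i. geometric_tripotent sm (vs i)"
    and "\<And>i. gt_minimal sm (vs i)" and orth: "\<And>i j. i \<noteq> j \<Longrightarrow> gt_orth sm (vs i) (vs j)"
  shows "geometric_tripotent sm (\<lambda>z. \<Sum>i. vs i z)"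
    and "\<And>i. face (vs i) \<subseteq> face (\<lambda>z. \<Sum>i. vs i z)"
    and "\<And>z. (\<lambda>i. vs i z) sums (\<Sum>i. vs i z)"
    and "\<And>b. (\<And>i. b \<in> perp (face (vs i))) \<Longrightarrow> (\<Sum>i. vs i b) = 0"
proof -
  define w where "w = (\<lambda>z. \<Sum>i. vs i z)"
  have bound: "(\<Sum>i<n. cmod (vs i z)) \<le> norm z" for n z
    by (rule orthogonal_minimal_gts_sum_cmod_le_norm) (use assms in auto)
  note series = dual_suminf[OF gt_dual[OF gt] bound]
  show sums: "(\<lambda>i. vs i z) sums (\<Sum>i. vs i z)" for z by (rule series(2))
  have "w f = 1" if "f \<in> face (vs i)" for f i
  proof -
    have "vs k f = (if k = i then 1 else 0)" for k
      using that gt_orth_vanishes_clsp[OF gt orth clsp_superset[THEN subsetD]]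
      unfolding face_def by auto
    then have "(\<lambda>k. vs k f) sums 1" using sums_single[of i "\<lambda>_. 1 :: complex"] by simp
    then show ?thesis unfolding w_def using sums sums_unique2 by blast
  qed
  then show face: "face (vs i) \<subseteq> face (\<lambda>z. \<Sum>i. vs i z)" for i
    unfolding face_def w_def by blast
  show vanish: "(\<Sum>i. vs i b) = 0" if "\<And>i. b \<in> perp (face (vs i))" for b
    using gt_vanishes_perp[OF gt that] by simp
  have "face w \<noteq> {}" using face gt_face_nonempty[OF gt] unfolding w_def by blast
  then have "onorm w = 1" using onorm_eq_1 series(1,3) unfolding w_def by blast
  moreover have "w g = 0" if "g \<in> perp (face w)" for g
    using that perp_antimono[OF face] unfolding w_def by (intro vanish) blast
  ultimately have "projective_unit sm w"
    using series(1) unfolding projective_unit_def w_def by blast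
  then show "geometric_tripotent sm (\<lambda>z. \<Sum>i. vs i z)"
    unfolding w_def by (rule SFS_projective_unit_gt[OF assms(1) _ \<open>face w \<noteq> {}\<close>[unfolded w_def]])
qed

end

theorem lemma2p1:
  fixes sm :: "complex \<Rightarrow> 'z::real_normed_vector \<Rightarrow> 'z"
    and vs :: "nat \<Rightarrow> 'z \<Rightarrow> complex"
    and v :: "'z \<Rightarrow> complex"
  assumes "complex_normed_space sm"
    and "SFS sm"
    and "\<And>i. geometric_tripotent sm (vs i)"
    and "\<And>i. gt_minimal sm (vs i)"
    and "\<And>i j. i \<noteq> j \<Longrightarrow> gt_orth sm (vs i) (vs j)"
    and "geometric_tripotent sm v"
    and "\<And>i. gt_le (vs i) v"
    and "\<And>w. geometric_tripotent sm w \<Longrightarrow> (\<forall>i. gt_le (vs i) w) \<Longrightarrow> gt_le v w"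
  shows "\<forall>z. (\<lambda>i. vs i z) sums v z"
proof -
  define w where "w = (\<lambda>z. \<Sum>i. vs i z)"
  have gt: "geometric_tripotent sm w"
    unfolding w_def using assms(1-5) by (rule orthogonal_minimal_gts_suminf)
  have face: "face (vs i) \<subseteq> face w" for i
    unfolding w_def using assms(1-5) by (rule orthogonal_minimal_gts_suminf)
  have sums: "(\<lambda>i. vs i z) sums w z" for z
    unfolding w_def using assms(1-5) by (rule orthogonal_minimal_gts_suminf)
  have vanish: "w b = 0" if "\<And>i. b \<in> perp (face (vs i))" for b
    unfolding w_def using assms(1-5) that by (rule orthogonal_minimal_gts_suminf)
  have "face v \<subseteq> face w" using assms(8)[OF gt] face unfolding gt_le_def by blast
  moreover have "w b = 0" if "b \<in> perp (face v)" for b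
    using that perp_antimono[OF assms(7)[unfolded gt_le_def]] by (intro vanish) blast
  ultimately have "w = v"
    using SFS_dual_eq_gt[OF assms(1,2,6) gt_dual[OF assms(1) gt] gt_onorm[OF assms(1) gt]] by blast
  then show ?thesis using sums by blast
qed

end
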